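(* Let $p,q$ be distinct primes, $n\geqslant1$, and let $S$ be a minimal generating set for a $C_{p^nq}$-transfer system. Then $|S|\leqslant 3k+1$ if $n=2k$, and $|S|\leqslant 3k+2$ if $n=2k+1$.
   Context: For a finite group $G$, an arrow is a pair $(H,K)$ of subgroups with $H\leqslant K$; identity arrows are those with $H=K$. A $G$-transfer system is a set of arrows containing all identities and closed under composition ($(H,K),(K,L)\Rightarrow(H,L)$), conjugation ($(H,K)\Rightarrow(gHg^{-1},gKg^{-1})$) and restriction ($(H,K)$ and $L\leqslant K\Rightarrow(H\cap L,L)$). For a set $S$ of non-identity arrows, $\langle S\rangle$ is the smallest transfer system containing $S$; $S$ is a minimal generating set of $\mathsf{T}$ if $\langle S\rangle=\mathsf{T}$ and $\langle S\setminus\{s\}\rangle\neq\mathsf{T}$ for all $s\in S$. *)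

theory Defs
  imports "HOL-Algebra.Elementary_Groups" "HOL-Computational_Algebra.Primes"
begin

definition arrows :: "('a, 'b) monoid_scheme \<Rightarrow> ('a set \<times> 'a set) set" where
  "arrows G = {(H, K). subgroup H G \<and> subgroup K G \<and> H \<subseteq> K}"

definition conj_set :: "('a, 'b) monoid_scheme \<Rightarrow> 'a \<Rightarrow> 'a set \<Rightarrow> 'a set" where
  "conj_set G g H = (\<lambda>h. g \<otimes>\<^bsub>G\<^esub> h \<otimes>\<^bsub>G\<^esub> inv\<^bsub>G\<^esub> g) ` H"

definition transfer_system :: "('a, 'b) monoid_scheme \<Rightarrow> ('a set \<times> 'a set) set \<Rightarrow> bool" where
  "transfer_system G T \<longleftrightarrow>
     T \<subseteq> arrows G \<and>
     (\<forall>H. subgroup H G \<longrightarrow> (H, H) \<in> T) \<and>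
     (\<forall>H K L. (H, K) \<in> T \<longrightarrow> (K, L) \<in> T \<longrightarrow> (H, L) \<in> T) \<and>
     (\<forall>H K g. (H, K) \<in> T \<longrightarrow> g \<in> carrier G \<longrightarrow> (conj_set G g H, conj_set G g K) \<in> T) \<and>
     (\<forall>H K L. (H, K) \<in> T \<longrightarrow> subgroup L G \<longrightarrow> L \<subseteq> K \<longrightarrow> (H \<inter> L, L) \<in> T)"

definition generated_ts :: "('a, 'b) monoid_scheme \<Rightarrow> ('a set \<times> 'a set) set \<Rightarrow> ('a set \<times> 'a set) set" where
  "generated_ts G S = \<Inter> {T. transfer_system G T \<and> S \<subseteq> T}"

definition minimal_generating_set ::
  "('a, 'b) monoid_scheme \<Rightarrow> ('a set \<times> 'a set) set \<Rightarrow> ('a set \<times> 'a set) set \<Rightarrow> bool" where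
  "minimal_generating_set G S T \<longleftrightarrow>
     S \<subseteq> arrows G \<and> (\<forall>(H, K) \<in> S. H \<noteq> K) \<and>
     generated_ts G S = T \<and>
     (\<forall>s \<in> S. generated_ts G (S - {s}) \<noteq> T)"

end

theory Submission
  imports Defs "HOL-Algebra.Multiplicative_Group" "HOL-Library.Product_Order"
begin

(*
  The subgroups of the cyclic group of order p^n q form the grid [n] \<times> [1]: the point (i, b)
  is the subgroup of order p^i q^b, and inclusion is the product order.  The group is abelian, so
  a transfer system is a relation on the grid that is reflexive, transitive and closed under
  restriction, and minimality of S says that each s \<in> S lies outside the closure Cl s of the others.

  Split S into the arrows T inside the top row, B inside the bottom row and V from the bottom to
  the top row.  Label an arrow s by the source level, or by reach s b, the highest level of the row
  b to which the source of s transfers within Cl s, which lies below the target when s ends in b.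
  Restricting and composing inside Cl s shows that suitable labellings are injective and avoid
  each other, whence |T| + |B| \<le> n, |V| + |B| \<le> n + 1 and |V| + |T| \<le> n + 1.  Summing,
  2 |S| \<le> 3 n + 2, which is the bound for n = 2k and n = 2k + 1.
*)

lemma card_add_le_card_of_disjoint_images:
  assumes "finite X" and "inj_on f A" "inj_on g B" and "\<And>a b. a \<in> A \<Longrightarrow> b \<in> B \<Longrightarrow> f a \<noteq> g b"
    and "f ` A \<subseteq> X" "g ` B \<subseteq> X"
  shows "card A + card B \<le> card X"
proof -
  have "finite (f ` A)" "finite (g ` B)"
    using assms(1,5,6) finite_subset by auto
  moreover have "f ` A \<inter> g ` B = {}"
    using assms(4) by blast
  ultimately have "card A + card B = card (f ` A \<union> g ` B)"
    using assms(2,3) by (simp add: card_Un_disjoint card_image)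
  also have "\<dots> \<le> card X"
    using assms(1,5,6) by (simp add: card_mono)
  finally show ?thesis .
qed

lemma inj_on_if_const:
  assumes "inj_on f {a \<in> A. P a}" and "\<And>a. a \<in> A \<Longrightarrow> P a \<Longrightarrow> f a \<noteq> c"
    and "\<And>a b. a \<in> A \<Longrightarrow> b \<in> A \<Longrightarrow> \<not> P a \<Longrightarrow> \<not> P b \<Longrightarrow> a = b"
  shows "inj_on (\<lambda>a. if P a then f a else c) A"
  using assms unfolding inj_on_def by (metis (mono_tags, lifting) mem_Collect_eq)

section \<open>Transfer systems on the grid [n] \<times> [1]\<close>

type_synonym point = "nat \<times> bool"

definition grid_closed :: "nat \<Rightarrow> (point \<times> point) set \<Rightarrow> bool" where
  "grid_closed n C \<longleftrightarrow>
     (\<forall>x. fst x \<le> n \<longrightarrow> (x, x) \<in> C) \<and>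
     (\<forall>x y z. (x, y) \<in> C \<longrightarrow> (y, z) \<in> C \<longrightarrow> (x, z) \<in> C) \<and>
     (\<forall>x y z. (x, y) \<in> C \<longrightarrow> fst z \<le> n \<longrightarrow> z \<le> y \<longrightarrow> (inf x z, z) \<in> C)"

locale grid_independent =
  fixes n :: nat and S :: "(point \<times> point) set" and Cl :: "point \<times> point \<Rightarrow> (point \<times> point) set"
  assumes arrow: "(x, y) \<in> S \<Longrightarrow> fst y \<le> n \<and> x \<le> y \<and> x \<noteq> y"
    and closed: "s \<in> S \<Longrightarrow> grid_closed n (Cl s)"
    and others_in: "s \<in> S \<Longrightarrow> t \<in> S \<Longrightarrow> t \<noteq> s \<Longrightarrow> t \<in> Cl s"
    and self_notin: "s \<in> S \<Longrightarrow> s \<notin> Cl s"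
begin

lemma Cl_refl: "s \<in> S \<Longrightarrow> fst x \<le> n \<Longrightarrow> (x, x) \<in> Cl s"
  using closed unfolding grid_closed_def by blast

lemma Cl_trans: "s \<in> S \<Longrightarrow> (x, y) \<in> Cl s \<Longrightarrow> (y, z) \<in> Cl s \<Longrightarrow> (x, z) \<in> Cl s"
  using closed unfolding grid_closed_def by blast

lemma Cl_restrict: "s \<in> S \<Longrightarrow> (x, y) \<in> Cl s \<Longrightarrow> fst z \<le> n \<Longrightarrow> z \<le> y \<Longrightarrow> (inf x z, z) \<in> Cl s"
  using closed unfolding grid_closed_def by blast

lemma Cl_restrict_above:
  "s \<in> S \<Longrightarrow> (x, y) \<in> Cl s \<Longrightarrow> fst z \<le> n \<Longrightarrow> x \<le> z \<Longrightarrow> z \<le> y \<Longrightarrow> (x, z) \<in> Cl s"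
  using Cl_restrict[of s x y z] by (simp add: inf_absorb1)

lemma finite_S: "finite S"
proof (rule finite_subset)
  show "S \<subseteq> ({..n} \<times> UNIV) \<times> ({..n} \<times> UNIV)"
    using arrow by (force simp: less_eq_prod_def)
qed simp

lemma same_source_le:
  assumes s: "(x, y) \<in> S" and t: "(x, y') \<in> S" and "y \<le> y'"
  shows "y = y'"
proof (rule ccontr)
  assume "y \<noteq> y'"
  then have "(x, y') \<in> Cl (x, y)"
    using others_in[OF s t] by simp
  then have "(x, y) \<in> Cl (x, y)"
    using Cl_restrict_above[OF s] arrow[OF s] \<open>y \<le> y'\<close> by blast
  then show False
    using self_notin[OF s] by blast
qed

lemma same_source_same_row:
  assumes "(x, (j, b)) \<in> S" "(x, (j', b)) \<in> S"
  shows "j = j'"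
  using same_source_le[OF assms] same_source_le[OF assms(2,1)] by (cases "j \<le> j'") auto

text \<open>Without \<open>reaches s b\<close> the set in \<open>reach s b\<close> may be empty, making its maximum junk.\<close>

definition reaches :: "point \<times> point \<Rightarrow> bool \<Rightarrow> bool" where
  "reaches s b \<longleftrightarrow> (fst s, (fst (fst s), b)) \<in> Cl s"

definition reach :: "point \<times> point \<Rightarrow> bool \<Rightarrow> nat" where
  "reach s b = Max {r. r \<le> n \<and> (fst s, (r, b)) \<in> Cl s}"

lemma reach_max: "r \<le> n \<Longrightarrow> (fst s, (r, b)) \<in> Cl s \<Longrightarrow> r \<le> reach s b"
  unfolding reach_def by (rule Max_ge) auto

lemma reach_mem:
  assumes "s \<in> S" "reaches s b"
  shows "(fst s, (reach s b, b)) \<in> Cl s" and "fst (fst s) \<le> reach s b"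
proof -
  let ?R = "{r. r \<le> n \<and> (fst s, (r, b)) \<in> Cl s}"
  have "fst (fst s) \<le> n"
    using arrow[of "fst s" "snd s"] assms(1) by (auto simp: less_eq_prod_def)
  then have "fst (fst s) \<in> ?R"
    using assms(2) unfolding reaches_def by simp
  moreover have "finite ?R"
    by (rule finite_subset[of _ "{..n}"]) auto
  ultimately show "(fst s, (reach s b, b)) \<in> Cl s" "fst (fst s) \<le> reach s b"
    unfolding reach_def using Max_in[of ?R] Max_ge[of ?R] by auto
qed

lemma reaches_source_row: "s \<in> S \<Longrightarrow> reaches s (snd (fst s))"
  unfolding reaches_def using Cl_refl arrow[of "fst s" "snd s"] by (auto simp: less_eq_prod_def)

lemma reach_less:
  assumes s: "(x, (j, b)) \<in> S" and "reaches (x, (j, b)) b"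
  shows "reach (x, (j, b)) b < j"
proof (rule ccontr)
  assume "\<not> ?thesis"
  then have "(x, (j, b)) \<in> Cl (x, (j, b))"
    using Cl_restrict_above[OF s reach_mem(1)[OF s assms(2)], of "(j, b)"] arrow[OF s] by simp
  then show False
    using self_notin[OF s] by blast
qed

lemma source_less_target_if_reaches:
  "(x, (j, b)) \<in> S \<Longrightarrow> reaches (x, (j, b)) b \<Longrightarrow> fst x < j"
  using reach_mem(2) reach_less by fastforce

text \<open>Otherwise the source of the first arrow transfers to the source of the second, and then
  along the second arrow beyond its own reach.\<close>
lemma reach_inj:
  assumes s: "(x, (j, b)) \<in> S" and s': "(x', (j', b)) \<in> S" and "(x, (j, b)) \<noteq> (x', (j', b))"
    and "x \<le> x'" and "reaches (x, (j, b)) b" and "reaches (x', (j', b)) b"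
  shows "reach (x, (j, b)) b \<noteq> reach (x', (j', b)) b"
proof
  let ?s = "(x, (j, b))" and ?s' = "(x', (j', b))"
  assume eq: "reach ?s b = reach ?s' b"
  have "(x, (reach ?s b, b)) \<in> Cl ?s"
    using reach_mem(1)[OF s] assms(5) by simp
  moreover have "x' \<le> (reach ?s b, b)"
    using eq reach_mem(2)[OF s' assms(6)] arrow[OF s'] by (auto simp: less_eq_prod_def)
  ultimately have "(x, x') \<in> Cl ?s"
    using Cl_restrict_above[OF s] arrow[OF s'] \<open>x \<le> x'\<close> by (auto simp: less_eq_prod_def)
  moreover have "?s' \<in> Cl ?s"
    using others_in[OF s s' not_sym[OF assms(3)]] .
  ultimately have "(x, (j', b)) \<in> Cl ?s"
    using Cl_trans[OF s] by blast
  then have "j' \<le> reach ?s' b"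
    using reach_max[of j' ?s b] arrow[OF s'] eq by simp
  then show False
    using reach_less[OF s' assms(6)] by simp
qed

text \<open>Otherwise \<open>t\<close>, restricted to the row \<open>b\<close>, would extend the reach of the source of \<open>s\<close>.\<close>
lemma reach_ne_source:
  assumes s: "s \<in> S" "reaches s b" and t: "t \<in> S" "t \<noteq> s"
    and "fst (fst t) < fst (snd t)" and "b \<le> snd (fst t)"
  shows "reach s b \<noteq> fst (fst t)"
proof
  obtain i a k c where t_eq: "t = ((i, a), (k, c))"
    by (metis prod.collapse)
  assume eq: "reach s b = fst (fst t)"
  have "((i, a), (k, c)) \<in> Cl s"
    using others_in[OF s(1) t] t_eq by simp
  then have "((i, b), (k, b)) \<in> Cl s"
    using Cl_restrict[OF s(1), of "(i, a)" "(k, c)" "(k, b)"] arrow[of "(i, a)" "(k, c)"] t(1) assms(5,6)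
    by (auto simp: t_eq inf_min inf_absorb2)
  then have "(fst s, (k, b)) \<in> Cl s"
    using Cl_trans[OF s(1) reach_mem(1)[OF s]] eq t_eq by simp
  then show False
    using reach_max[of k s b] arrow[of "(i, a)" "(k, c)"] t(1) eq assms(5) t_eq by simp
qed

lemma unreaching_unique_le:
  assumes s: "((i, False), (j, True)) \<in> S" and s': "((i', False), (j', True)) \<in> S"
    and "i \<le> i'" and "\<not> reaches ((i, False), (j, True)) True"
  shows "((i, False), (j, True)) = ((i', False), (j', True))"
proof (rule ccontr)
  assume "\<not> ?thesis"
  then have "((i', False), (j', True)) \<in> Cl ((i, False), (j, True))"
    using others_in[OF s s' not_sym] by blast
  then have "((i, False), (i, True)) \<in> Cl ((i, False), (j, True))"
    using Cl_restrict[OF s _, of _ _ "(i, True)"] arrow[OF s'] \<open>i \<le> i'\<close>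
    by (fastforce simp: inf_min)
  then show False
    using assms(4) unfolding reaches_def by simp
qed

definition row_arrows :: "bool \<Rightarrow> bool \<Rightarrow> (point \<times> point) set" where
  "row_arrows a b = {s \<in> S. snd (fst s) = a \<and> snd (snd s) = b}"

lemma row_arrowsE:
  assumes "s \<in> row_arrows a b"
  obtains i j where "s = ((i, a), (j, b))" and "((i, a), (j, b)) \<in> S"
  using assms unfolding row_arrows_def by (metis (mono_tags, lifting) mem_Collect_eq prod.collapse)

lemma row_arrows_level_less: "s \<in> row_arrows a a \<Longrightarrow> fst (fst s) < fst (snd s)"
  by (auto elim!: row_arrowsE dest!: arrow simp: less_eq_prod_def)

lemma row_arrows_level_le: "s \<in> row_arrows a b \<Longrightarrow> fst (fst s) \<le> n \<and> fst (snd s) \<le> n"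
  by (auto elim!: row_arrowsE dest!: arrow simp: less_eq_prod_def)

lemma reaches_source_row_arrows: "s \<in> row_arrows a b \<Longrightarrow> reaches s a"
  by (metis (mono_tags, lifting) mem_Collect_eq reaches_source_row row_arrows_def)

lemma row_arrows_reach_bounds:
  assumes "s \<in> row_arrows a b" and "reaches s b"
  shows "fst (fst s) \<le> reach s b" and "reach s b < n"
proof -
  obtain i j where s_eq: "s = ((i, a), (j, b))" and s: "((i, a), (j, b)) \<in> S"
    using assms(1) by (rule row_arrowsE)
  have r: "reaches ((i, a), (j, b)) b"
    using assms(2) s_eq by simp
  show "fst (fst s) \<le> reach s b"
    using reach_mem(2)[OF s r] s_eq by simp
  have "reach ((i, a), (j, b)) b < j"
    by (rule reach_less[OF s r])
  then show "reach s b < n"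
    using arrow[OF s] s_eq by simp
qed

lemma unreaching_unique:
  assumes "s \<in> row_arrows False True" "t \<in> row_arrows False True"
    and "\<not> reaches s True" "\<not> reaches t True"
  shows "s = t"
proof -
  obtain i j where s_eq: "s = ((i, False), (j, True))" and s: "((i, False), (j, True)) \<in> S"
    using assms(1) by (rule row_arrowsE)
  obtain i' j' where t_eq: "t = ((i', False), (j', True))" and t: "((i', False), (j', True)) \<in> S"
    using assms(2) by (rule row_arrowsE)
  consider "i \<le> i'" | "i' \<le> i"
    by linarith
  then show ?thesis
  proof cases
    case 1
    then show ?thesis
      using unreaching_unique_le[OF s t 1] assms(3) s_eq t_eq by simp
  next
    case 2
    then show ?thesis
      using unreaching_unique_le[OF t s 2] assms(4) s_eq t_eq by simp
  qed
qed

lemma card_split: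
  "card S = card (row_arrows True True) + card (row_arrows False False) + card (row_arrows False True)"
proof -
  have fin: "finite (row_arrows a b)" for a b
    using finite_S unfolding row_arrows_def by simp
  have "s \<in> (row_arrows True True \<union> row_arrows False False) \<union> row_arrows False True"
    if "s \<in> S" for s
    using arrow[of "fst s" "snd s"] that
    by (cases "snd (fst s)"; cases "snd (snd s)") (auto simp: row_arrows_def less_eq_prod_def)
  then have "S = (row_arrows True True \<union> row_arrows False False) \<union> row_arrows False True"
    by (auto simp: row_arrows_def)
  also have "card \<dots> = card (row_arrows True True \<union> row_arrows False False) + card (row_arrows False True)"
    by (rule card_Un_disjoint[OF finite_UnI[OF fin fin] fin]) (auto simp: row_arrows_def)
  also have "card (row_arrows True True \<union> row_arrows False False)
      = card (row_arrows True True) + card (row_arrows False False)"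
    by (rule card_Un_disjoint[OF fin fin]) (auto simp: row_arrows_def)
  finally show ?thesis .
qed

lemma inj_on_source:
  assumes "A \<subseteq> row_arrows a b"
  shows "inj_on (\<lambda>s. fst (fst s)) A"
proof (rule inj_onI)
  fix s t assume "s \<in> A" "t \<in> A" and eq: "fst (fst s) = fst (fst t)"
  then obtain i j i' j' where "s = ((i, a), (j, b))" "((i, a), (j, b)) \<in> S"
    and "t = ((i', a), (j', b))" "((i', a), (j', b)) \<in> S"
    using assms by (blast elim: row_arrowsE)
  then show "s = t"
    using eq same_source_same_row by auto
qed

lemma inj_on_reach:
  assumes "A \<subseteq> row_arrows a b" and "\<And>s. s \<in> A \<Longrightarrow> reaches s b"
  shows "inj_on (\<lambda>s. reach s b) A"
proof -
  have eq_if_le: "s = t"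
    if st: "s \<in> A" "t \<in> A" "fst (fst s) \<le> fst (fst t)" "reach s b = reach t b" for s t
  proof -
    obtain i j i' j' where "s = ((i, a), (j, b))" "((i, a), (j, b)) \<in> S"
      and "t = ((i', a), (j', b))" "((i', a), (j', b)) \<in> S"
      using st(1,2) assms(1) by (blast elim: row_arrowsE)
    then show "s = t"
      using reach_inj[of "(i, a)" j b "(i', a)" j'] assms(2) st by (auto simp: less_eq_prod_def)
  qed
  show ?thesis
  proof (rule inj_onI)
    fix s t assume "s \<in> A" "t \<in> A" "reach s b = reach t b"
    then show "s = t"
      using eq_if_le[of s t] eq_if_le[of t s] by (cases "fst (fst s) \<le> fst (fst t)") auto
  qed
qed

lemma top_bottom_bound: "card (row_arrows True True) + card (row_arrows False False) \<le> n"
proof -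
  let ?T = "row_arrows True True" and ?B = "row_arrows False False"
  have reaches_B: "reaches s False" if "s \<in> ?B" for s
    using that by (rule reaches_source_row_arrows)
  have "card ?T + card ?B \<le> card {..<n}"
  proof (rule card_add_le_card_of_disjoint_images)
    show "inj_on (\<lambda>s. fst (fst s)) ?T"
      by (rule inj_on_source[OF order_refl])
    show "inj_on (\<lambda>s. reach s False) ?B"
      by (rule inj_on_reach[OF order_refl reaches_B])
    show "fst (fst t) \<noteq> reach s False" if t: "t \<in> ?T" and s: "s \<in> ?B" for t s
    proof -
      have "t \<in> S" "s \<in> S" "t \<noteq> s"
        using t s by (auto simp: row_arrows_def)
      then show ?thesis
        using reach_ne_source[OF \<open>s \<in> S\<close> reaches_B[OF s] \<open>t \<in> S\<close> \<open>t \<noteq> s\<close> row_arrows_level_less[OF t]]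
        by simp
    qed
    show "(\<lambda>s. fst (fst s)) ` ?T \<subseteq> {..<n}"
      using row_arrows_level_less row_arrows_level_le by fastforce
    show "(\<lambda>s. reach s False) ` ?B \<subseteq> {..<n}"
      using row_arrows_reach_bounds(2) reaches_B by auto
  qed simp
  then show ?thesis
    by simp
qed

text \<open>At most one arrow of V fails to reach the top row; it is labelled \<open>n\<close>.\<close>

lemma mixed_bottom_bound: "card (row_arrows False True) + card (row_arrows False False) \<le> n + 1"
proof -
  let ?V = "row_arrows False True" and ?B = "row_arrows False False"
  let ?f = "\<lambda>s. if reaches s True then fst (fst s) else n"
  have reaches_B: "reaches s False" if "s \<in> ?B" for s
    using that by (rule reaches_source_row_arrows)
  have "card ?V + card ?B \<le> card {..n}"
  proof (rule card_add_le_card_of_disjoint_images)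
    show "inj_on ?f ?V"
    proof (rule inj_on_if_const)
      show "inj_on (\<lambda>s. fst (fst s)) {s \<in> ?V. reaches s True}"
        by (rule inj_on_source) auto
      show "fst (fst s) \<noteq> n" if "s \<in> ?V" "reaches s True" for s
        using row_arrows_reach_bounds[OF that] by simp
    qed (rule unreaching_unique)
    show "inj_on (\<lambda>s. reach s False) ?B"
      by (rule inj_on_reach[OF order_refl reaches_B])
    show "?f t \<noteq> reach s False" if t: "t \<in> ?V" and s: "s \<in> ?B" for t s
    proof (cases "reaches t True")
      case True
      have "t \<in> S" "s \<in> S" "t \<noteq> s"
        using t s by (auto simp: row_arrows_def)
      moreover have "fst (fst t) < fst (snd t)"
        using t True source_less_target_if_reaches by (auto elim!: row_arrowsE)
      ultimately show ?thesis
        using reach_ne_source[of s False t] True reaches_B[OF s] by simp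
    next
      case False
      then show ?thesis
        using row_arrows_reach_bounds(2)[OF s reaches_B[OF s]] by simp
    qed
    show "?f ` ?V \<subseteq> {..n}"
      using row_arrows_level_le by auto
    show "(\<lambda>s. reach s False) ` ?B \<subseteq> {..n}"
      using row_arrows_reach_bounds(2) reaches_B by fastforce
  qed simp
  then show ?thesis
    by simp
qed

lemma mixed_top_bound: "card (row_arrows False True) + card (row_arrows True True) \<le> n + 1"
proof -
  let ?V = "row_arrows False True" and ?T = "row_arrows True True"
  let ?f = "\<lambda>s. if reaches s True then reach s True else n"
  have "card ?V + card ?T \<le> card {..n}"
  proof (rule card_add_le_card_of_disjoint_images)
    show "inj_on ?f ?V"
    proof (rule inj_on_if_const)
      show "inj_on (\<lambda>s. reach s True) {s \<in> ?V. reaches s True}"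
        by (rule inj_on_reach) auto
      show "reach s True \<noteq> n" if "s \<in> ?V" "reaches s True" for s
        using row_arrows_reach_bounds[OF that] by simp
    qed (rule unreaching_unique)
    show "inj_on (\<lambda>s. fst (fst s)) ?T"
      by (rule inj_on_source[OF order_refl])
    show "?f s \<noteq> fst (fst t)" if s: "s \<in> ?V" and t: "t \<in> ?T" for s t
    proof (cases "reaches s True")
      case True
      have "t \<in> S" "s \<in> S" "t \<noteq> s" "True \<le> snd (fst t)"
        using t s by (auto simp: row_arrows_def)
      then show ?thesis
        using reach_ne_source[OF \<open>s \<in> S\<close> True \<open>t \<in> S\<close> \<open>t \<noteq> s\<close> row_arrows_level_less[OF t]] True
        by simp
    next
      case False
      then show ?thesis
        using row_arrows_level_less[OF t] row_arrows_level_le[OF t] by simp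
    qed
    show "?f ` ?V \<subseteq> {..n}"
      using row_arrows_reach_bounds(2) by (fastforce simp: less_imp_le)
    show "(\<lambda>s. fst (fst s)) ` ?T \<subseteq> {..n}"
      using row_arrows_level_le by fastforce
  qed simp
  then show ?thesis
    by simp
qed

theorem twice_card_le: "2 * card S \<le> 3 * n + 2"
  using card_split top_bottom_bound mixed_bottom_bound mixed_top_bound by linarith

end

section \<open>Generated transfer systems\<close>

lemma transfer_system_trans:
  "transfer_system G T \<Longrightarrow> (H, K) \<in> T \<Longrightarrow> (K, L) \<in> T \<Longrightarrow> (H, L) \<in> T"
  unfolding transfer_system_def by blast

lemma transfer_system_restrict:
  "transfer_system G T \<Longrightarrow> (H, K) \<in> T \<Longrightarrow> subgroup L G \<Longrightarrow> L \<subseteq> K \<Longrightarrow> (H \<inter> L, L) \<in> T"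
  unfolding transfer_system_def by blast

lemma generated_ts_refl: "subgroup H G \<Longrightarrow> (H, H) \<in> generated_ts G A"
  unfolding generated_ts_def transfer_system_def by blast

lemma generated_ts_trans:
  "(H, K) \<in> generated_ts G A \<Longrightarrow> (K, L) \<in> generated_ts G A \<Longrightarrow> (H, L) \<in> generated_ts G A"
  unfolding generated_ts_def using transfer_system_trans by blast

lemma generated_ts_restrict:
  "(H, K) \<in> generated_ts G A \<Longrightarrow> subgroup L G \<Longrightarrow> L \<subseteq> K \<Longrightarrow> (H \<inter> L, L) \<in> generated_ts G A"
  unfolding generated_ts_def using transfer_system_restrict by blast

lemma subset_generated_ts: "A \<subseteq> generated_ts G A"
  unfolding generated_ts_def by blast

lemma generated_ts_least: "A \<subseteq> generated_ts G B \<Longrightarrow> generated_ts G A \<subseteq> generated_ts G B"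
  unfolding generated_ts_def by blast

lemma minimal_generating_set_irredundant:
  assumes "minimal_generating_set G S T" "s \<in> S"
  shows "s \<notin> generated_ts G (S - {s})"
proof
  assume s: "s \<in> generated_ts G (S - {s})"
  have "S - {s} \<subseteq> generated_ts G (S - {s})"
    by (rule subset_generated_ts)
  with s have "S \<subseteq> generated_ts G (S - {s})"
    by blast
  then have "generated_ts G S \<subseteq> generated_ts G (S - {s})"
    by (rule generated_ts_least)
  moreover have "S - {s} \<subseteq> generated_ts G S"
    using subset_generated_ts[of S G] by blast
  then have "generated_ts G (S - {s}) \<subseteq> generated_ts G S"
    by (rule generated_ts_least)
  ultimately have "generated_ts G (S - {s}) = generated_ts G S"
    by (rule subset_antisym[rotated])
  moreover have "generated_ts G S = T" "generated_ts G (S - {s}) \<noteq> T"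
    using assms unfolding minimal_generating_set_def by auto
  ultimately show False
    by simp
qed

section \<open>Subgroups of a finite cyclic group\<close>

definition torsion :: "('a, 'b) monoid_scheme \<Rightarrow> nat \<Rightarrow> 'a set" where
  "torsion G d = {x \<in> carrier G. x [^]\<^bsub>G\<^esub> d = \<one>\<^bsub>G\<^esub>}"

lemma (in group) card_subgroup_dvd:
  assumes "subgroup K G" "subgroup H G" "K \<subseteq> H"
  shows "card K dvd card H"
proof -
  interpret H: group "G\<lparr>carrier := H\<rparr>"
    using subgroup_imp_group assms(2) by blast
  have "subgroup K (G\<lparr>carrier := H\<rparr>)"
    using subgroup_incl assms by blast
  then have "card (rcosets\<^bsub>G\<lparr>carrier := H\<rparr>\<^esub> K) * card K = card H"
    using H.lagrange by (simp add: order_def)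
  then show ?thesis
    by (metis dvd_triv_right)
qed

lemma (in group) torsion_mono: "d dvd d' \<Longrightarrow> torsion G d \<subseteq> torsion G d'"
  unfolding torsion_def by (auto simp: pow_eq_id intro: dvd_trans)

lemma (in group) subgroup_subset_torsion_card:
  assumes "subgroup H G"
  shows "H \<subseteq> torsion G (card H)"
proof
  fix y assume "y \<in> H"
  then have y: "y \<in> carrier G"
    using subgroup.subset[OF assms] by blast
  have "generate G {y} \<subseteq> H"
    using generate_subgroup_incl[OF _ assms] \<open>y \<in> H\<close> by blast
  then have "ord y dvd card H"
    using card_subgroup_dvd[OF generate_is_subgroup assms] y by (simp add: generate_pow_card)
  then show "y \<in> torsion G (card H)"
    unfolding torsion_def using pow_eq_id y by simp
qed

lemma (in comm_group) subgroup_torsion: "subgroup (torsion G d) G"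
  by (rule subgroupI) (auto simp: torsion_def nat_pow_distrib nat_pow_inv)

locale finite_cyclic_group = group +
  assumes cyclic: "cyclic_group G" and finite_carrier: "finite (carrier G)"
begin

sublocale comm_group
  using cyclic cyclic_imp_abelian_group by blast

lemma generatorE:
  obtains g where "g \<in> carrier G" "carrier G = generate G {g}" "ord g = order G"
proof -
  obtain g where g: "g \<in> carrier G" "subgroup_generated G {g} = G"
    using cyclic unfolding cyclic_group_def by blast
  then have "carrier G = generate G {g}"
    using carrier_subgroup_generated[of G "{g}"] by auto
  moreover have "ord g = order G"
    using cyclic_order_is_ord[OF g(1)] g(2) by simp
  ultimately show thesis
    using that g(1) by blast
qed

lemma torsion_eq_generate_pow:
  assumes g: "g \<in> carrier G" "carrier G = generate G {g}" "ord g = order G"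
    and e: "order G = d * e"
  shows "torsion G d = generate G {g [^] e}"
proof
  have "d \<noteq> 0"
    using e order_gt_0_iff_finite finite_carrier by auto
  show "generate G {g [^] e} \<subseteq> torsion G d"
  proof (rule generate_subgroup_incl[OF _ subgroup_torsion])
    have "(g [^] e) [^] d = g [^] ord g"
      using g e by (simp add: nat_pow_pow mult.commute)
    then show "{g [^] e} \<subseteq> torsion G d"
      using g(1) by (simp add: torsion_def)
  qed
  show "torsion G d \<subseteq> generate G {g [^] e}"
  proof
    fix y assume y: "y \<in> torsion G d"
    have "y \<in> {g [^] k | k. k \<in> (UNIV :: nat set)}"
      using y g generate_pow_nat[OF g(1)] \<open>d \<noteq> 0\<close> e order_gt_0_iff_finite finite_carrier
      by (simp add: torsion_def)
    then obtain k :: nat where k: "y = g [^] k"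
      by blast
    have "ord g dvd k * d"
      using y k g(1) by (simp add: torsion_def nat_pow_pow pow_eq_id)
    then have "e dvd k"
      using e g(3) \<open>d \<noteq> 0\<close> by (simp add: mult.commute)
    then obtain t where "k = e * t"
      by blast
    then have "y = (g [^] e) [^] t"
      using k g(1) by (simp add: nat_pow_pow)
    moreover have "(g [^] e) [^] int t \<in> generate G {g [^] e}"
      using generate_pow[of "g [^] e"] g(1) by auto
    ultimately show "y \<in> generate G {g [^] e}"
      by (simp add: int_pow_int)
  qed
qed

lemma card_torsion:
  assumes "d dvd order G"
  shows "card (torsion G d) = d"
proof -
  obtain g where g: "g \<in> carrier G" "carrier G = generate G {g}" "ord g = order G"
    by (rule generatorE)
  obtain e where e: "order G = d * e"
    using assms by blast
  then have "e \<noteq> 0"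
    using order_gt_0_iff_finite finite_carrier by auto
  have "card (torsion G d) = card (generate G {g [^] e})"
    using torsion_eq_generate_pow[OF g e] by simp
  also have "\<dots> = ord (g [^] e)"
    using g(1) by (simp add: generate_pow_card)
  also have "\<dots> = d"
    using ord_pow[OF g(1), of e] e g(3) \<open>e \<noteq> 0\<close> by simp
  finally show ?thesis .
qed

lemma torsion_card_subgroup:
  assumes "subgroup H G"
  shows "torsion G (card H) = H"
proof -
  have "card H dvd order G"
    using card_subgroup_dvd[OF assms subgroup_self] subgroup.subset[OF assms] by (simp add: order_def)
  then have "card (torsion G (card H)) = card H"
    by (rule card_torsion)
  moreover have "finite (torsion G (card H))"
    using finite_carrier by (simp add: torsion_def)
  ultimately show ?thesis
    using card_subset_eq[OF _ subgroup_subset_torsion_card[OF assms]] by simp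
qed

lemma torsion_subset_iff:
  assumes "d dvd order G" "d' dvd order G"
  shows "torsion G d \<subseteq> torsion G d' \<longleftrightarrow> d dvd d'"
proof
  assume "torsion G d \<subseteq> torsion G d'"
  then have "card (torsion G d) dvd card (torsion G d')"
    by (rule card_subgroup_dvd[OF subgroup_torsion subgroup_torsion])
  then show "d dvd d'"
    using card_torsion assms by simp
qed (rule torsion_mono)

end

section \<open>The subgroup lattice of a cyclic group of order \<open>p ^ n * q\<close>\<close>

locale prime_pair =
  fixes p q :: nat
  assumes prime_p: "prime p" and prime_q: "prime q" and distinct_primes: "p \<noteq> q"
begin

definition label :: "point \<Rightarrow> nat" where
  "label x = p ^ fst x * (if snd x then q else 1)"

lemma label_dvd_iff: "label x dvd label y \<longleftrightarrow> x \<le> y"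
proof
  assume "x \<le> y"
  then have "p ^ fst x dvd p ^ fst y" "(if snd x then q else 1) dvd (if snd y then q else 1)"
    by (auto simp: less_eq_prod_def le_imp_power_dvd)
  then show "label x dvd label y"
    unfolding label_def by (rule mult_dvd_mono)
next
  assume dvd: "label x dvd label y"
  have "coprime (p ^ fst x) (if snd y then q else 1)"
    using prime_p prime_q distinct_primes by (auto simp: primes_coprime)
  moreover have "p ^ fst x dvd p ^ fst y * (if snd y then q else 1)"
    using dvd unfolding label_def by (meson dvd_mult_left)
  ultimately have "p ^ fst x dvd p ^ fst y"
    by (metis coprime_dvd_mult_left_iff)
  then have "fst x \<le> fst y"
    using prime_p by (meson power_dvd_imp_le prime_gt_1_nat)
  moreover have "snd y" if "snd x"
  proof (rule ccontr)
    assume "\<not> snd y"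
    then have "q dvd p ^ fst y"
      using dvd that unfolding label_def by (metis dvd_mult_right mult.right_neutral)
    then show False
      using prime_p prime_q distinct_primes prime_dvd_power primes_dvd_imp_eq by blast
  qed
  ultimately show "x \<le> y"
    by (auto simp: less_eq_prod_def)
qed

lemma label_dvd: "fst x \<le> n \<Longrightarrow> label x dvd p ^ n * q"
  using label_dvd_iff[of x "(n, True)"] by (simp add: label_def less_eq_prod_def)

lemma dvd_imp_label:
  assumes "d dvd p ^ n * q"
  obtains x where "fst x \<le> n" and "d = label x"
proof -
  obtain a b where ab: "d = a * b" "a dvd p ^ n" "b dvd q"
    using division_decomp[OF assms] by blast
  obtain i where "i \<le> n" "a = p ^ i"
    using ab(2) divides_primepow_nat[OF prime_p] by blast
  moreover have "b = 1 \<or> b = q"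
    using ab(3) prime_q by (simp add: prime_nat_iff)
  ultimately show thesis
    using that[of "(i, b = q)"] ab(1) prime_q by (auto simp: label_def)
qed

end

locale cyclic_pnq_group = finite_cyclic_group + prime_pair +
  fixes n :: nat
  assumes order_eq: "order G = p ^ n * q"
begin

definition subgroup_at :: "point \<Rightarrow> 'a set" where
  "subgroup_at x = torsion G (label x)"

lemma subgroup_subgroup_at: "subgroup (subgroup_at x) G"
  unfolding subgroup_at_def by (rule subgroup_torsion)

lemma subgroup_at_subset_iff:
  "fst x \<le> n \<Longrightarrow> fst y \<le> n \<Longrightarrow> subgroup_at x \<subseteq> subgroup_at y \<longleftrightarrow> x \<le> y"
  unfolding subgroup_at_def by (simp add: torsion_subset_iff order_eq label_dvd label_dvd_iff)

lemma subgroup_at_eq_iff: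
  assumes "fst x \<le> n" "fst y \<le> n"
  shows "subgroup_at x = subgroup_at y \<longleftrightarrow> x = y"
proof
  assume "subgroup_at x = subgroup_at y"
  then have "x \<le> y" "y \<le> x"
    using subgroup_at_subset_iff[OF assms] subgroup_at_subset_iff[OF assms(2,1)] by auto
  then show "x = y"
    by (rule order.antisym)
qed simp

lemma subgroup_eq_subgroup_at:
  assumes "subgroup H G"
  obtains x where "fst x \<le> n" and "subgroup_at x = H"
proof -
  have "card H dvd p ^ n * q"
    using card_subgroup_dvd[OF assms subgroup_self] subgroup.subset[OF assms] order_eq
    by (simp add: order_def)
  then obtain x where "fst x \<le> n" "card H = label x"
    by (rule dvd_imp_label)
  then show thesis
    using that torsion_card_subgroup[OF assms] by (simp add: subgroup_at_def)
qed

text \<open>An order embedding onto the subgroup lattice preserves meets.\<close>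
lemma subgroup_at_inf:
  assumes "fst x \<le> n" "fst z \<le> n"
  shows "subgroup_at (inf x z) = subgroup_at x \<inter> subgroup_at z"
proof -
  have "subgroup (subgroup_at x \<inter> subgroup_at z) G"
    by (rule subgroups_Inter_pair[OF subgroup_subgroup_at subgroup_subgroup_at])
  then obtain w where w: "fst w \<le> n" "subgroup_at w = subgroup_at x \<inter> subgroup_at z"
    by (rule subgroup_eq_subgroup_at) simp
  have inf: "fst (inf x z) \<le> n"
    using assms by (simp add: inf_prod_def inf_min)
  have "w \<le> x" "w \<le> z"
    using w subgroup_at_subset_iff[OF w(1) assms(1)] subgroup_at_subset_iff[OF w(1) assms(2)] by auto
  then have "w \<le> inf x z"
    by (rule le_infI)
  moreover have "subgroup_at (inf x z) \<subseteq> subgroup_at x" "subgroup_at (inf x z) \<subseteq> subgroup_at z"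
    using subgroup_at_subset_iff[OF inf assms(1)] subgroup_at_subset_iff[OF inf assms(2)] by auto
  then have "inf x z \<le> w"
    using subgroup_at_subset_iff[OF inf w(1)] w(2) by blast
  ultimately have "w = inf x z"
    by (rule order.antisym)
  then show ?thesis
    using w(2) by simp
qed

definition pullback :: "('a set \<times> 'a set) set \<Rightarrow> (point \<times> point) set" where
  "pullback A = {(x, y). fst x \<le> n \<and> fst y \<le> n \<and> (subgroup_at x, subgroup_at y) \<in> A}"

lemma grid_closed_pullback: "grid_closed n (pullback (generated_ts G A))"
  unfolding grid_closed_def
proof (intro conjI allI impI)
  fix x y z :: point
  show "fst x \<le> n \<Longrightarrow> (x, x) \<in> pullback (generated_ts G A)"
    by (simp add: pullback_def generated_ts_refl subgroup_subgroup_at)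
  show "(x, y) \<in> pullback (generated_ts G A) \<Longrightarrow> (y, z) \<in> pullback (generated_ts G A)
    \<Longrightarrow> (x, z) \<in> pullback (generated_ts G A)"
    unfolding pullback_def using generated_ts_trans by blast
  assume xy: "(x, y) \<in> pullback (generated_ts G A)" and z: "fst z \<le> n" "z \<le> y"
  then have x: "fst x \<le> n" and y: "fst y \<le> n"
    and gen: "(subgroup_at x, subgroup_at y) \<in> generated_ts G A"
    by (auto simp: pullback_def)
  have "subgroup_at z \<subseteq> subgroup_at y"
    using subgroup_at_subset_iff[OF z(1) y] z(2) by simp
  then have "(subgroup_at x \<inter> subgroup_at z, subgroup_at z) \<in> generated_ts G A"
    by (rule generated_ts_restrict[OF gen subgroup_subgroup_at])
  moreover have "fst (inf x z) \<le> n"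
    using x by (simp add: inf_prod_def inf_min)
  ultimately show "(inf x z, z) \<in> pullback (generated_ts G A)"
    using subgroup_at_inf[OF x z(1)] z(1) by (simp add: pullback_def)
qed

lemma inj_on_pullback: "inj_on (map_prod subgroup_at subgroup_at) (pullback A)"
proof (rule inj_onI)
  fix s t assume "s \<in> pullback A" "t \<in> pullback A"
    and "map_prod subgroup_at subgroup_at s = map_prod subgroup_at subgroup_at t"
  then show "s = t"
    by (cases s, cases t) (simp add: pullback_def subgroup_at_eq_iff)
qed

lemma image_pullback:
  assumes "A \<subseteq> arrows G"
  shows "map_prod subgroup_at subgroup_at ` pullback A = A"
proof
  show "map_prod subgroup_at subgroup_at ` pullback A \<subseteq> A"
    by (auto simp: pullback_def)
  show "A \<subseteq> map_prod subgroup_at subgroup_at ` pullback A"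
  proof
    fix a assume "a \<in> A"
    then obtain H K where a: "a = (H, K)" "subgroup H G" "subgroup K G"
      using assms unfolding arrows_def by blast
    obtain x where "fst x \<le> n" "subgroup_at x = H"
      using a(2) by (rule subgroup_eq_subgroup_at)
    moreover obtain y where "fst y \<le> n" "subgroup_at y = K"
      using a(3) by (rule subgroup_eq_subgroup_at)
    ultimately show "a \<in> map_prod subgroup_at subgroup_at ` pullback A"
      using \<open>a \<in> A\<close> a(1) by (intro image_eqI[of _ _ "(x, y)"]) (simp_all add: pullback_def)
  qed
qed

lemma card_pullback: "A \<subseteq> arrows G \<Longrightarrow> card (pullback A) = card A"
  using card_image[OF inj_on_pullback] image_pullback by metis

lemma grid_independent_pullback:
  assumes "minimal_generating_set G S T"
  shows "grid_independent n (pullback S)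
    (\<lambda>s. pullback (generated_ts G (S - {map_prod subgroup_at subgroup_at s})))"
proof
  have S: "S \<subseteq> arrows G" "\<And>H K. (H, K) \<in> S \<Longrightarrow> H \<noteq> K"
    using assms unfolding minimal_generating_set_def by auto
  fix x y assume "(x, y) \<in> pullback S"
  then show "fst y \<le> n \<and> x \<le> y \<and> x \<noteq> y"
    using S subgroup_at_subset_iff unfolding pullback_def arrows_def by blast
next
  fix s show "grid_closed n (pullback (generated_ts G (S - {map_prod subgroup_at subgroup_at s})))"
    by (rule grid_closed_pullback)
next
  fix s t assume "s \<in> pullback S" "t \<in> pullback S" "t \<noteq> s"
  then have "map_prod subgroup_at subgroup_at t \<in> S - {map_prod subgroup_at subgroup_at s}"
    by (auto simp: pullback_def subgroup_at_eq_iff)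
  then show "t \<in> pullback (generated_ts G (S - {map_prod subgroup_at subgroup_at s}))"
    using subset_generated_ts \<open>t \<in> pullback S\<close> by (fastforce simp: pullback_def)
next
  fix s assume "s \<in> pullback S"
  then show "s \<notin> pullback (generated_ts G (S - {map_prod subgroup_at subgroup_at s}))"
    using minimal_generating_set_irredundant[OF assms] by (auto simp: pullback_def)
qed

lemma twice_card_minimal_generating_set_le:
  assumes "minimal_generating_set G S T"
  shows "2 * card S \<le> 3 * n + 2"
proof -
  interpret grid_independent n "pullback S"
    "\<lambda>s. pullback (generated_ts G (S - {map_prod subgroup_at subgroup_at s}))"
    using assms by (rule grid_independent_pullback)
  have "card (pullback S) = card S"
    using assms card_pullback unfolding minimal_generating_set_def by blast
  then show ?thesis
    using twice_card_le by simp
qed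

end

theorem corollary6p4:
  fixes G :: "('a, 'b) monoid_scheme" and p q n :: nat
    and S T :: "('a set \<times> 'a set) set"
  assumes "group G" and "cyclic_group G"
    and "prime p" and "prime q" and "p \<noteq> q" and "n \<ge> 1"
    and "order G = p ^ n * q"
    and "transfer_system G T"
    and "minimal_generating_set G S T"
  shows "(\<forall>k. n = 2 * k \<longrightarrow> card S \<le> 3 * k + 1) \<and>
         (\<forall>k. n = 2 * k + 1 \<longrightarrow> card S \<le> 3 * k + 2)"
proof -
  interpret group G
    by fact
  have "finite (carrier G)"
    using assms(3,4,7) order_gt_0_iff_finite by (simp add: prime_gt_0_nat)
  then interpret cyclic_pnq_group G p q n
    using assms by unfold_locales auto
  have "2 * card S \<le> 3 * n + 2"
    using assms(9) by (rule twice_card_minimal_generating_set_le)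
  then show ?thesis
    by auto
qed

end
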